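(* Let $R$ be an arbitrary (not necessarily unital) associative ring. Then the full subcategory of s-unital left $R$-modules is closed under submodules, quotient modules, extensions, and all colimits (including direct sums and direct limits) in the abelian category of all (nonunital) left $R$-modules. In other words, it is a hereditary torsion class in that category.
   Context: Modules over a nonunital ring $R$ are not assumed unital; the category of all left $R$-modules is abelian. A left $R$-module $M$ is called s-unital if for every $m\in M$ there exists $e\in R$ (not necessarily idempotent) with $em=m$. *)

theory Defs
  imports Main
begin

text \<open>The ring is
  the type 'r of class ring (HOL's class ring has no unit).\<close>

record ('r, 'm) nmod =
  mcarrier :: "'m set"
  mplus    :: "'m \<Rightarrow> 'm \<Rightarrow> 'm"
  mzero    :: "'m"
  msmult   :: "'r \<Rightarrow> 'm \<Rightarrow> 'm"

definition nmodule :: "('r::ring, 'm, 'z) nmod_scheme \<Rightarrow> bool" where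
  "nmodule M \<longleftrightarrow>
     mzero M \<in> mcarrier M \<and>
     (\<forall>x\<in>mcarrier M. \<forall>y\<in>mcarrier M. mplus M x y \<in> mcarrier M) \<and>
     (\<forall>x\<in>mcarrier M. \<forall>y\<in>mcarrier M. \<forall>z\<in>mcarrier M.
        mplus M (mplus M x y) z = mplus M x (mplus M y z)) \<and>
     (\<forall>x\<in>mcarrier M. \<forall>y\<in>mcarrier M. mplus M x y = mplus M y x) \<and>
     (\<forall>x\<in>mcarrier M. mplus M (mzero M) x = x) \<and>
     (\<forall>x\<in>mcarrier M. \<exists>y\<in>mcarrier M. mplus M x y = mzero M) \<and>
     (\<forall>r. \<forall>x\<in>mcarrier M. msmult M r x \<in> mcarrier M) \<and>
     (\<forall>r. \<forall>x\<in>mcarrier M. \<forall>y\<in>mcarrier M.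
        msmult M r (mplus M x y) = mplus M (msmult M r x) (msmult M r y)) \<and>
     (\<forall>r s. \<forall>x\<in>mcarrier M. msmult M (r + s) x = mplus M (msmult M r x) (msmult M s x)) \<and>
     (\<forall>r s. \<forall>x\<in>mcarrier M. msmult M (r * s) x = msmult M r (msmult M s x))"

definition nhom :: "('r::ring, 'm, 'z) nmod_scheme \<Rightarrow> ('r, 'n, 'w) nmod_scheme \<Rightarrow> ('m \<Rightarrow> 'n) \<Rightarrow> bool" where
  "nhom M N f \<longleftrightarrow>
     (\<forall>x\<in>mcarrier M. f x \<in> mcarrier N) \<and>
     (\<forall>x\<in>mcarrier M. \<forall>y\<in>mcarrier M. f (mplus M x y) = mplus N (f x) (f y)) \<and>
     (\<forall>r. \<forall>x\<in>mcarrier M. f (msmult M r x) = msmult N r (f x))"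

definition submodule :: "('r::ring, 'm, 'z) nmod_scheme \<Rightarrow> 'm set \<Rightarrow> bool" where
  "submodule M S \<longleftrightarrow>
     S \<subseteq> mcarrier M \<and> mzero M \<in> S \<and>
     (\<forall>x\<in>S. \<forall>y\<in>S. mplus M x y \<in> S) \<and>
     (\<forall>x\<in>S. \<exists>y\<in>S. mplus M x y = mzero M) \<and>
     (\<forall>r. \<forall>x\<in>S. msmult M r x \<in> S)"

definition s_unital :: "('r::ring, 'm, 'z) nmod_scheme \<Rightarrow> bool" where
  "s_unital M \<longleftrightarrow> (\<forall>m\<in>mcarrier M. \<exists>e. msmult M e m = m)"

text \<open>Small diagrams of modules: a graph with vertex set I, edge set E, source and
  target maps, modules N i and homomorphisms phi e : N (src e) \<rightarrow> N (tgt e).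
  (Colimits over a small category are the colimits over its underlying graph.)\<close>
definition ndiagram :: "'i set \<Rightarrow> 'e set \<Rightarrow> ('e \<Rightarrow> 'i) \<Rightarrow> ('e \<Rightarrow> 'i)
    \<Rightarrow> ('i \<Rightarrow> ('r::ring, 'n) nmod) \<Rightarrow> ('e \<Rightarrow> 'n \<Rightarrow> 'n) \<Rightarrow> bool" where
  "ndiagram I E src tgt N phi \<longleftrightarrow>
     (\<forall>i\<in>I. nmodule (N i)) \<and>
     (\<forall>e\<in>E. src e \<in> I \<and> tgt e \<in> I \<and> nhom (N (src e)) (N (tgt e)) (phi e))"

definition ncocone :: "'i set \<Rightarrow> 'e set \<Rightarrow> ('e \<Rightarrow> 'i) \<Rightarrow> ('e \<Rightarrow> 'i)
    \<Rightarrow> ('i \<Rightarrow> ('r::ring, 'n) nmod) \<Rightarrow> ('e \<Rightarrow> 'n \<Rightarrow> 'n)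
    \<Rightarrow> ('r, 'x) nmod \<Rightarrow> ('i \<Rightarrow> 'n \<Rightarrow> 'x) \<Rightarrow> bool" where
  "ncocone I E src tgt N phi X h \<longleftrightarrow>
     nmodule X \<and> (\<forall>i\<in>I. nhom (N i) X (h i)) \<and>
     (\<forall>e\<in>E. \<forall>x\<in>mcarrier (N (src e)). h (tgt e) (phi e x) = h (src e) x)"

text \<open>The universal property is
  required for target modules whose ambient type is 'm set (rich enough to hold
  e.g. quotients of M); every genuine colimit satisfies it.\<close>
definition ncolimit :: "'i set \<Rightarrow> 'e set \<Rightarrow> ('e \<Rightarrow> 'i) \<Rightarrow> ('e \<Rightarrow> 'i)
    \<Rightarrow> ('i \<Rightarrow> ('r::ring, 'n) nmod) \<Rightarrow> ('e \<Rightarrow> 'n \<Rightarrow> 'n)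
    \<Rightarrow> ('r, 'm) nmod \<Rightarrow> ('i \<Rightarrow> 'n \<Rightarrow> 'm) \<Rightarrow> bool" where
  "ncolimit I E src tgt N phi M g \<longleftrightarrow>
     ndiagram I E src tgt N phi \<and> ncocone I E src tgt N phi M g \<and>
     (\<forall>(X :: ('r, 'm set) nmod) h. ncocone I E src tgt N phi X h \<longrightarrow>
        (\<exists>u. nhom M X u \<and> (\<forall>i\<in>I. \<forall>x\<in>mcarrier (N i). u (g i x) = h i x) \<and>
             (\<forall>v. nhom M X v \<and> (\<forall>i\<in>I. \<forall>x\<in>mcarrier (N i). v (g i x) = h i x)
                  \<longrightarrow> (\<forall>y\<in>mcarrier M. v y = u y))))"

end

(* Closure under submodules and epimorphic images is immediate.  Everything else rests on the
   circle product e o e' = e + e' - e' e: if e' fixes x - e x, then e o e' fixes x, and it still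
   fixes everything e fixes.  For an extension 0 -> A -> B -> C -> 0, pick e fixing the image of b
   in C and e' fixing b - e b, which lies in A.  For a colimit M, the images of the s-unital
   modules N_i consist of "stably unital" elements, whose fixing elements can be chosen to
   dominate any given one.  The elements all of whose multiples are stably unital form a
   submodule, and since a colimit is generated by the images of its cocone maps, it is all of M. *)

theory Submission
  imports Defs
begin

locale nonunital_module =
  fixes M :: "('r::ring, 'm, 'z) nmod_scheme"
  assumes nmodule: "nmodule M"
begin

lemma mzero_closed [simp]: "mzero M \<in> mcarrier M"
  and mplus_closed [simp]: "x \<in> mcarrier M \<Longrightarrow> y \<in> mcarrier M \<Longrightarrow> mplus M x y \<in> mcarrier M"
  and msmult_closed [simp]: "x \<in> mcarrier M \<Longrightarrow> msmult M r x \<in> mcarrier M"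
  and mplus_assoc: "x \<in> mcarrier M \<Longrightarrow> y \<in> mcarrier M \<Longrightarrow> z \<in> mcarrier M \<Longrightarrow>
    mplus M (mplus M x y) z = mplus M x (mplus M y z)"
  and mplus_commute: "x \<in> mcarrier M \<Longrightarrow> y \<in> mcarrier M \<Longrightarrow> mplus M x y = mplus M y x"
  and mplus_mzero_left [simp]: "x \<in> mcarrier M \<Longrightarrow> mplus M (mzero M) x = x"
  and mneg_exists: "x \<in> mcarrier M \<Longrightarrow> \<exists>y\<in>mcarrier M. mplus M x y = mzero M"
  and msmult_mplus: "x \<in> mcarrier M \<Longrightarrow> y \<in> mcarrier M \<Longrightarrow>
    msmult M r (mplus M x y) = mplus M (msmult M r x) (msmult M r y)"
  and msmult_add: "x \<in> mcarrier M \<Longrightarrow> msmult M (r + s) x = mplus M (msmult M r x) (msmult M s x)"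
  and msmult_mult: "x \<in> mcarrier M \<Longrightarrow> msmult M (r * s) x = msmult M r (msmult M s x)"
  using nmodule unfolding nmodule_def by blast+

lemma mplus_mzero_right [simp]: "x \<in> mcarrier M \<Longrightarrow> mplus M x (mzero M) = x"
  by (metis mplus_commute mplus_mzero_left mzero_closed)

lemma mplus_left_commute: "x \<in> mcarrier M \<Longrightarrow> y \<in> mcarrier M \<Longrightarrow> z \<in> mcarrier M \<Longrightarrow>
    mplus M x (mplus M y z) = mplus M y (mplus M x z)"
  by (metis mplus_assoc mplus_commute)

lemma mplus_left_cancel:
  assumes "x \<in> mcarrier M" "y \<in> mcarrier M" "z \<in> mcarrier M" "mplus M x y = mplus M x z"
  shows "y = z"
proof -
  obtain w where w: "w \<in> mcarrier M" "mplus M x w = mzero M" using mneg_exists assms(1) by blast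
  have "mplus M w (mplus M x y) = mplus M w (mplus M x z)" using assms(4) by simp
  then show ?thesis using w assms by (metis mplus_assoc mplus_commute mplus_mzero_left)
qed

lemma mplus_idem_imp_mzero: "x \<in> mcarrier M \<Longrightarrow> mplus M x x = x \<Longrightarrow> x = mzero M"
  using mplus_left_cancel[of x x "mzero M"] by simp

lemma msmult_zero [simp]: "x \<in> mcarrier M \<Longrightarrow> msmult M 0 x = mzero M"
  using mplus_idem_imp_mzero[of "msmult M 0 x"] msmult_add[of x 0 0] by simp

lemma msmult_mzero [simp]: "msmult M r (mzero M) = mzero M"
  using mplus_idem_imp_mzero[of "msmult M r (mzero M)"] msmult_mplus[of "mzero M" "mzero M" r] by simp

lemma msmult_minus_cancel: "x \<in> mcarrier M \<Longrightarrow> mplus M (msmult M r x) (msmult M (- r) x) = mzero M"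
  by (metis msmult_add msmult_zero right_minus)

text \<open>In the unitisation of the ring, \<open>1 - (e + e' - e' * e) = (1 - e') * (1 - e)\<close>.\<close>

lemma msmult_circle_fixes:
  assumes x: "x \<in> mcarrier M"
    and fixes_rest: "msmult M e' (mplus M x (msmult M (- e) x)) = mplus M x (msmult M (- e) x)"
  shows "msmult M (e + e' - e' * e) x = x"
proof -
  have "mplus M (msmult M e' x) (msmult M (- (e' * e)) x) = mplus M x (msmult M (- e) x)"
    using x fixes_rest by (simp add: msmult_mplus msmult_mult[symmetric])
  moreover have "e + e' - e' * e = e + e' + - (e' * e)" by simp
  ultimately have "msmult M (e + e' - e' * e) x = mplus M (msmult M e x) (mplus M x (msmult M (- e) x))"
    using x by (simp only: msmult_add mplus_assoc msmult_closed)
  also have "\<dots> = x"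
    using x by (simp add: mplus_left_commute msmult_minus_cancel)
  finally show ?thesis .
qed

lemma msmult_circle_fixes_fixed:
  assumes z: "z \<in> mcarrier M" and fixed: "msmult M e z = z"
  shows "msmult M (e + e' - e' * e) z = z"
proof -
  have "e + e' - e' * e = e + e' + - (e' * e)" by simp
  then have "msmult M (e + e' - e' * e) z
      = mplus M (mplus M z (msmult M (e' * e) z)) (msmult M (- (e' * e)) z)"
    using z fixed by (simp only: msmult_add msmult_mult)
  also have "\<dots> = z" using z by (simp add: mplus_assoc msmult_minus_cancel)
  finally show ?thesis .
qed

end


locale module_quotient = nonunital_module M for M :: "('r::ring, 'm, 'z) nmod_scheme" +
  fixes T :: "'m set"
  assumes submodule_T: "submodule M T"
begin

lemma T_closed: "t \<in> T \<Longrightarrow> t \<in> mcarrier M"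
  and mzero_T: "mzero M \<in> T"
  and mplus_T: "x \<in> T \<Longrightarrow> y \<in> T \<Longrightarrow> mplus M x y \<in> T"
  and mneg_T: "x \<in> T \<Longrightarrow> \<exists>y\<in>T. mplus M x y = mzero M"
  and msmult_T: "x \<in> T \<Longrightarrow> msmult M r x \<in> T"
  using submodule_T unfolding submodule_def by blast+

definition coset :: "'m \<Rightarrow> 'm set" where
  "coset m = {mplus M m t | t. t \<in> T}"

definition quotient_module :: "('r, 'm set) nmod" where
  "quotient_module = \<lparr>mcarrier = coset ` mcarrier M,
     mplus = (\<lambda>A B. {mplus M a b | a b. a \<in> A \<and> b \<in> B}),
     mzero = T,
     msmult = (\<lambda>r A. {mplus M (msmult M r a) t | a t. a \<in> A \<and> t \<in> T})\<rparr>"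

lemma quotient_module_simps [simp]:
  "mcarrier quotient_module = coset ` mcarrier M"
  "mzero quotient_module = T"
  by (simp_all add: quotient_module_def)

lemma coset_self: "m \<in> mcarrier M \<Longrightarrow> m \<in> coset m"
proof -
  assume "m \<in> mcarrier M"
  then have "m = mplus M m (mzero M)" by simp
  then show "m \<in> coset m" unfolding coset_def using mzero_T by blast
qed

lemma coset_mplus:
  assumes m: "m \<in> mcarrier M" and n: "n \<in> mcarrier M"
  shows "mplus quotient_module (coset m) (coset n) = coset (mplus M m n)"
proof (intro equalityI subsetI)
  fix x assume "x \<in> mplus quotient_module (coset m) (coset n)"
  then obtain t t' where tt: "t \<in> T" "t' \<in> T" "x = mplus M (mplus M m t) (mplus M n t')"
    unfolding quotient_module_def coset_def by auto
  then have "x = mplus M (mplus M m n) (mplus M t t')"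
    using m n T_closed by (simp add: mplus_assoc mplus_left_commute)
  then show "x \<in> coset (mplus M m n)" unfolding coset_def using tt mplus_T by blast
next
  fix x assume "x \<in> coset (mplus M m n)"
  then obtain t where t: "t \<in> T" "x = mplus M (mplus M m n) t" unfolding coset_def by blast
  then have "x = mplus M (mplus M m t) n"
    using m n T_closed by (simp add: mplus_assoc mplus_commute[of n t])
  moreover have "mplus M m t \<in> coset m" unfolding coset_def using t by blast
  ultimately show "x \<in> mplus quotient_module (coset m) (coset n)"
    unfolding quotient_module_def using coset_self[OF n] by auto
qed

lemma coset_msmult:
  assumes m: "m \<in> mcarrier M"
  shows "msmult quotient_module r (coset m) = coset (msmult M r m)"
proof (intro equalityI subsetI)
  fix x assume "x \<in> msmult quotient_module r (coset m)"
  then obtain t t' where tt: "t \<in> T" "t' \<in> T" "x = mplus M (msmult M r (mplus M m t)) t'"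
    unfolding quotient_module_def coset_def by auto
  then have "x = mplus M (msmult M r m) (mplus M (msmult M r t) t')"
    using m T_closed by (simp add: msmult_mplus mplus_assoc)
  then show "x \<in> coset (msmult M r m)" unfolding coset_def using tt mplus_T msmult_T by blast
next
  fix x assume "x \<in> coset (msmult M r m)"
  then obtain t where "t \<in> T" "x = mplus M (msmult M r m) t" unfolding coset_def by blast
  then show "x \<in> msmult quotient_module r (coset m)" unfolding quotient_module_def using coset_self[OF m] by auto
qed

lemma coset_eq_T_iff: "m \<in> mcarrier M \<Longrightarrow> coset m = T \<longleftrightarrow> m \<in> T"
proof
  assume "m \<in> mcarrier M" "coset m = T"
  then show "m \<in> T" using coset_self by blast
next
  assume m: "m \<in> T"
  show "coset m = T"
  proof (intro equalityI subsetI)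
    fix x assume "x \<in> coset m"
    then show "x \<in> T" unfolding coset_def using m mplus_T by auto
  next
    fix t assume t: "t \<in> T"
    obtain y where y: "y \<in> T" "mplus M m y = mzero M" using mneg_T m by blast
    have "t = mplus M m (mplus M y t)" using y t m T_closed by (metis mplus_assoc mplus_mzero_left)
    then show "t \<in> coset m" unfolding coset_def using y t mplus_T by blast
  qed
qed

lemma coset_mzero: "coset (mzero M) = T"
  using coset_eq_T_iff mzero_T mzero_closed by blast

lemma nmodule_quotient_module: "nmodule quotient_module"
proof -
  have zero: "T \<in> coset ` mcarrier M" using coset_mzero mzero_closed by (metis image_eqI)
  have lzero: "mplus quotient_module T (coset m) = coset m" if "m \<in> mcarrier M" for m
    using coset_mplus[OF mzero_closed that] coset_mzero that by simp
  have neg: "\<exists>y\<in>mcarrier M. coset (mplus M m y) = T" if "m \<in> mcarrier M" for m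
    using mneg_exists[OF that] coset_mzero by metis
  show ?thesis
    unfolding nmodule_def quotient_module_simps ball_simps bex_simps
    by (simp add: zero lzero neg coset_mplus coset_msmult mplus_assoc mplus_commute mplus_left_commute
        msmult_mplus msmult_add msmult_mult)
qed

lemma nhom_coset: "nhom M quotient_module coset"
  unfolding nhom_def by (simp add: coset_mplus coset_msmult)

lemma nhom_zero: "nhom M quotient_module (\<lambda>_. T)"
  unfolding nhom_def quotient_module_simps
  using coset_mplus[of "mzero M" "mzero M"] coset_msmult[of "mzero M"] coset_mzero by force

end

lemma nhom_comp: "nhom A B f \<Longrightarrow> nhom B C h \<Longrightarrow> nhom A C (\<lambda>x. h (f x))"
  unfolding nhom_def by simp

lemma ncocone_comp_nhom:
  assumes "ncocone I E src tgt N phi X h" "nmodule Y" "nhom X Y u"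
  shows "ncocone I E src tgt N phi Y (\<lambda>i x. u (h i x))"
  using assms nhom_comp unfolding ncocone_def by metis

text \<open>As the images of the cocone maps lie in \<open>T\<close>, both the quotient map \<open>M \<rightarrow> M/T\<close> and the
  zero map factor the induced cocone into \<open>M/T\<close>; uniqueness of the factorisation makes them equal.\<close>

lemma ncolimit_subset_submodule:
  assumes colim: "ncolimit I E src tgt N phi (M :: ('r::ring, 'k) nmod) g"
    and T: "submodule M T"
    and images: "\<forall>i\<in>I. \<forall>x\<in>mcarrier (N i). g i x \<in> T"
  shows "mcarrier M \<subseteq> T"
proof
  fix y assume y: "y \<in> mcarrier M"
  have cocone: "ncocone I E src tgt N phi M g" using colim unfolding ncolimit_def by blast
  then interpret module_quotient M T
    using T by (simp add: module_quotient_def module_quotient_axioms_def nonunital_module_def ncocone_def)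
  have cocone_quotient: "ncocone I E src tgt N phi quotient_module (\<lambda>i x. coset (g i x))"
    by (rule ncocone_comp_nhom[OF cocone nmodule_quotient_module nhom_coset])
  have "\<forall>(X :: ('r, 'k set) nmod) h. ncocone I E src tgt N phi X h \<longrightarrow>
      (\<exists>u. nhom M X u \<and> (\<forall>i\<in>I. \<forall>x\<in>mcarrier (N i). u (g i x) = h i x) \<and>
        (\<forall>v. nhom M X v \<and> (\<forall>i\<in>I. \<forall>x\<in>mcarrier (N i). v (g i x) = h i x)
          \<longrightarrow> (\<forall>y\<in>mcarrier M. v y = u y)))"
    using colim unfolding ncolimit_def by (elim conjE)
  from this[rule_format, OF cocone_quotient] obtain u where
    "\<forall>v. nhom M quotient_module v \<and> (\<forall>i\<in>I. \<forall>x\<in>mcarrier (N i). v (g i x) = coset (g i x))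
       \<longrightarrow> (\<forall>y\<in>mcarrier M. v y = u y)"
    by (elim exE conjE)
  with y have unique: "\<And>v. nhom M quotient_module v \<Longrightarrow>
      \<forall>i\<in>I. \<forall>x\<in>mcarrier (N i). v (g i x) = coset (g i x) \<Longrightarrow> v y = u y"
    by simp
  have "coset y = u y" by (rule unique[OF nhom_coset]) simp
  moreover have "T = u y"
    by (rule unique[OF nhom_zero]) (metis images coset_eq_T_iff T_closed)
  ultimately show "y \<in> T" using coset_eq_T_iff y by simp
qed

text \<open>Elements fixed by some ring element need not be closed under addition; stably unital
  ones are: choose a fixing element \<open>u\<^sub>1\<close> of \<open>x\<close>, then one of \<open>y\<close> that fixes everything
  \<open>u\<^sub>1\<close> fixes.\<close>

definition stably_unital :: "('r::ring, 'm, 'z) nmod_scheme \<Rightarrow> 'm \<Rightarrow> bool" where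
  "stably_unital M m \<longleftrightarrow> m \<in> mcarrier M \<and>
     (\<forall>e. \<exists>u. msmult M u m = m \<and> (\<forall>z\<in>mcarrier M. msmult M e z = z \<longrightarrow> msmult M u z = z))"

context nonunital_module
begin

lemma stably_unital_mzero: "stably_unital M (mzero M)"
  unfolding stably_unital_def by auto

lemma stably_unital_mplus:
  assumes x: "stably_unital M x" and y: "stably_unital M y"
  shows "stably_unital M (mplus M x y)"
  unfolding stably_unital_def
proof (intro conjI allI)
  have xM: "x \<in> mcarrier M" and yM: "y \<in> mcarrier M"
    using x y unfolding stably_unital_def by auto
  then show "mplus M x y \<in> mcarrier M" by simp
  fix e
  obtain u1 where u1: "msmult M u1 x = x" "\<forall>z\<in>mcarrier M. msmult M e z = z \<longrightarrow> msmult M u1 z = z"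
    using x unfolding stably_unital_def by blast
  obtain u2 where u2: "msmult M u2 y = y" "\<forall>z\<in>mcarrier M. msmult M u1 z = z \<longrightarrow> msmult M u2 z = z"
    using y unfolding stably_unital_def by blast
  have "msmult M u2 (mplus M x y) = mplus M x y"
    using u1 u2 xM yM by (simp add: msmult_mplus)
  with u1 u2 show "\<exists>u. msmult M u (mplus M x y) = mplus M x y \<and>
      (\<forall>z\<in>mcarrier M. msmult M e z = z \<longrightarrow> msmult M u z = z)"
    by blast
qed

lemma stably_unital_neg:
  assumes x: "stably_unital M x" and y: "y \<in> mcarrier M" and xy: "mplus M x y = mzero M"
  shows "stably_unital M y"
  unfolding stably_unital_def
proof (intro conjI allI)
  show "y \<in> mcarrier M" by (rule y)
  have xM: "x \<in> mcarrier M" using x unfolding stably_unital_def by blast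
  fix e
  obtain u where u: "msmult M u x = x" "\<forall>z\<in>mcarrier M. msmult M e z = z \<longrightarrow> msmult M u z = z"
    using x unfolding stably_unital_def by blast
  have "mplus M x (msmult M u y) = mplus M x y"
    using msmult_mplus[OF xM y, of u] u(1) xy by simp
  then have "msmult M u y = y" by (rule mplus_left_cancel[OF xM msmult_closed[OF y] y])
  with u show "\<exists>u. msmult M u y = y \<and> (\<forall>z\<in>mcarrier M. msmult M e z = z \<longrightarrow> msmult M u z = z)"
    by blast
qed

lemma submodule_stably_unital:
  "submodule M {m. stably_unital M m \<and> (\<forall>r. stably_unital M (msmult M r m))}" (is "submodule M ?S")
proof -
  have closed: "?S \<subseteq> mcarrier M" unfolding stably_unital_def by blast
  have zero: "mzero M \<in> ?S" by (simp add: stably_unital_mzero)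
  have add: "mplus M x y \<in> ?S" if "x \<in> ?S" "y \<in> ?S" for x y
  proof -
    have "x \<in> mcarrier M" "y \<in> mcarrier M" using that closed by auto
    then show ?thesis using that by (simp add: stably_unital_mplus msmult_mplus)
  qed
  have neg: "\<exists>y\<in>?S. mplus M x y = mzero M" if x: "x \<in> ?S" for x
  proof -
    obtain y where y: "y \<in> mcarrier M" "mplus M x y = mzero M"
      using mneg_exists x closed by blast
    have "mplus M (msmult M r x) (msmult M r y) = mzero M" for r
      using msmult_mplus[of x y r] x closed y by auto
    then have "stably_unital M (msmult M r y)" for r
      using stably_unital_neg[of "msmult M r x" "msmult M r y"] x y(1) by simp
    then show ?thesis using stably_unital_neg x y by auto
  qed
  have smult: "msmult M r x \<in> ?S" if "x \<in> ?S" for r x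
  proof -
    have "x \<in> mcarrier M" using that closed by auto
    then show ?thesis using that by (simp add: msmult_mult[symmetric])
  qed
  show ?thesis
    unfolding submodule_def by (intro conjI ballI allI closed zero add neg smult)
qed

end

lemma stably_unital_nhom_image:
  assumes N: "nmodule N" and M: "nmodule M" and f: "nhom N M f" and unital: "s_unital N"
    and x: "x \<in> mcarrier N"
  shows "stably_unital M (f x)"
  unfolding stably_unital_def
proof (intro conjI allI)
  interpret N: nonunital_module N by (rule nonunital_module.intro[OF N])
  interpret M: nonunital_module M by (rule nonunital_module.intro[OF M])
  show "f x \<in> mcarrier M" using f x unfolding nhom_def by blast
  fix e
  have "mplus N x (msmult N (- e) x) \<in> mcarrier N" using x by simp
  then obtain e' where "msmult N e' (mplus N x (msmult N (- e) x)) = mplus N x (msmult N (- e) x)"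
    using unital unfolding s_unital_def by blast
  then have "msmult N (e + e' - e' * e) x = x" by (rule N.msmult_circle_fixes[OF x])
  then have "msmult M (e + e' - e' * e) (f x) = f x"
    using f x unfolding nhom_def by metis
  with M.msmult_circle_fixes_fixed show "\<exists>u. msmult M u (f x) = f x \<and>
      (\<forall>z\<in>mcarrier M. msmult M e z = z \<longrightarrow> msmult M u z = z)"
    by blast
qed

lemma s_unital_submodule:
  assumes "s_unital M" "submodule M S"
  shows "s_unital (M\<lparr>mcarrier := S\<rparr>)"
  using assms unfolding s_unital_def submodule_def by auto

lemma s_unital_nhom_image:
  assumes f: "nhom M Q f" and onto: "mcarrier Q \<subseteq> f ` mcarrier M" and unital: "s_unital M"
  shows "s_unital Q"
  unfolding s_unital_def
proof
  fix q assume "q \<in> mcarrier Q"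
  then obtain m where m: "m \<in> mcarrier M" "q = f m" using onto by blast
  then obtain e where "msmult M e m = m" using unital unfolding s_unital_def by blast
  then have "msmult Q e q = q" using f m unfolding nhom_def by metis
  then show "\<exists>e. msmult Q e q = q" ..
qed

lemma s_unital_extension:
  assumes B: "nmodule B" and C: "nmodule C" and f: "nhom A B f" and g: "nhom B C g"
    and exact: "{y \<in> mcarrier B. g y = mzero C} \<subseteq> f ` mcarrier A"
    and unital_A: "s_unital A" and unital_C: "s_unital C"
  shows "s_unital B"
  unfolding s_unital_def
proof
  interpret B: nonunital_module B by (rule nonunital_module.intro[OF B])
  interpret C: nonunital_module C by (rule nonunital_module.intro[OF C])
  fix b assume b: "b \<in> mcarrier B"
  have gb: "g b \<in> mcarrier C" using g b unfolding nhom_def by blast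
  obtain e where e: "msmult C e (g b) = g b" using unital_C gb unfolding s_unital_def by blast
  define y where "y = mplus B b (msmult B (- e) b)"
  have "g y = mplus C (msmult C e (g b)) (msmult C (- e) (g b))"
    using g b e unfolding nhom_def y_def by simp
  also have "\<dots> = mzero C" by (rule C.msmult_minus_cancel[OF gb])
  finally have "g y = mzero C" .
  moreover have "y \<in> mcarrier B" using b unfolding y_def by simp
  ultimately have "y \<in> f ` mcarrier A" using exact by blast
  then obtain a where a: "a \<in> mcarrier A" "y = f a" by blast
  obtain e' where "msmult A e' a = a" using unital_A a unfolding s_unital_def by blast
  then have "msmult B e' y = y" using a f unfolding nhom_def by metis
  then show "\<exists>e. msmult B e b = b"
    unfolding y_def using B.msmult_circle_fixes[OF b] by blast
qed

lemma s_unital_ncolimit: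
  assumes colim: "ncolimit I E src tgt N phi (M :: ('r::ring, 'k) nmod) g"
    and unital: "\<forall>i\<in>I. s_unital (N i)"
  shows "s_unital M"
proof -
  have "ndiagram I E src tgt N phi" "ncocone I E src tgt N phi M g"
    using colim unfolding ncolimit_def by auto
  then have M: "nmodule M" and N: "\<And>i. i \<in> I \<Longrightarrow> nmodule (N i)"
    and g: "\<And>i. i \<in> I \<Longrightarrow> nhom (N i) M (g i)"
    unfolding ndiagram_def ncocone_def by auto
  interpret nonunital_module M by (rule nonunital_module.intro[OF M])
  let ?S = "{m. stably_unital M m \<and> (\<forall>r. stably_unital M (msmult M r m))}"
  have "g i x \<in> ?S" if i: "i \<in> I" and x: "x \<in> mcarrier (N i)" for i x
  proof -
    have "msmult M r (g i x) = g i (msmult (N i) r x)" for r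
      using g[OF i] x unfolding nhom_def by metis
    moreover have "msmult (N i) r x \<in> mcarrier (N i)" for r
      using N[OF i] x unfolding nmodule_def by blast
    ultimately show ?thesis
      using stably_unital_nhom_image[OF N[OF i] M g[OF i]] unital i x by simp
  qed
  then have "mcarrier M \<subseteq> ?S"
    using ncolimit_subset_submodule[OF colim submodule_stably_unital] by blast
  then show ?thesis unfolding s_unital_def stably_unital_def by blast
qed

theorem proposition2p2:
  shows
  \<comment> \<open>closed under submodules\<close>
  "(\<forall>(M :: ('r::ring, 'm) nmod) S.
      nmodule M \<and> s_unital M \<and> submodule M S \<longrightarrow> s_unital (M\<lparr>mcarrier := S\<rparr>))
   \<and>
  \<comment> \<open>closed under quotient modules (epimorphic images)\<close>
   (\<forall>(M :: ('r, 'm) nmod) (Q :: ('r, 'q) nmod) f.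
      nmodule M \<and> nmodule Q \<and> nhom M Q f \<and> f ` mcarrier M = mcarrier Q \<and> s_unital M
      \<longrightarrow> s_unital Q)
   \<and>
  \<comment> \<open>closed under extensions: 0 -> A -> B -> C -> 0 exact\<close>
   (\<forall>(A :: ('r, 'a) nmod) (B :: ('r, 'b) nmod) (C :: ('r, 'c) nmod) f g.
      nmodule A \<and> nmodule B \<and> nmodule C \<and> nhom A B f \<and> nhom B C g \<and>
      inj_on f (mcarrier A) \<and> g ` mcarrier B = mcarrier C \<and>
      f ` mcarrier A = {y \<in> mcarrier B. g y = mzero C} \<and>
      s_unital A \<and> s_unital C \<longrightarrow> s_unital B)
   \<and>
  \<comment> \<open>closed under all (small) colimits\<close>
   (\<forall>(I :: 'i set) (E :: 'e set) src tgt (N :: 'i \<Rightarrow> ('r, 'n) nmod) phi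
      (M :: ('r, 'k) nmod) g.
      ncolimit I E src tgt N phi M g \<and> (\<forall>i\<in>I. s_unital (N i)) \<longrightarrow> s_unital M)"
  apply (intro conjI allI impI; elim conjE)
  subgoal by (rule s_unital_submodule)
  subgoal by (rule s_unital_nhom_image) auto
  subgoal for A B C f g by (rule s_unital_extension[where A = A and C = C and f = f and g = g]) auto
  subgoal by (rule s_unital_ncolimit)
  done

end
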